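(* Let $\varphi$ be a bounded setfunction defined on a set-algebra $(J,\mathcal{B})$, with $\varphi(\emptyset)=0$. Then there exists a sequence $(\varphi_n\colon n\in\mathbb{N})$ of finite quotients of $\varphi$ such that $\varphi_n\rightarrowtail\varphi$.
   Context: A set-algebra $(J,\mathcal{B})$ is a family of subsets of $J$ containing $\emptyset$ and closed under complement and finite union; a setfunction on it is a map $\mathcal{B}\to\mathbb{R}$. For $k\in\mathbb{N}$ and a map $F\colon J\to[k]$ with $F^{-1}(i)\in\mathcal{B}$ for every $i$, the quotient $\varphi\circ F^{-1}$ is the setfunction $A\mapsto\varphi(F^{-1}(A))$ on $2^{[k]}$ (a finite quotient); $Q_k(\varphi)\subseteq\mathbb{R}^{2^k}$ is the set of all quotients of $\varphi$ on $[k]$. $\varphi_n\rightarrowtail\varphi$ means that for every $k\in\mathbb{N}$ the Hausdorff distance in Euclidean $\mathbb{R}^{2^k}$ between $Q_k(\varphi_n)$ and $Q_k(\varphi)$ tends to $0$. *)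

theory Defs
  imports "HOL-Analysis.Analysis"
begin

text \<open>Set-algebras (J,B) are rendered by the library predicate algebra J B
  (B is a family of subsets of J containing the empty set, closed under
  complement in J and finite unions). A setfunction is phi :: 'a set => real,
  only its values on B matter.\<close>

definition quotient_map :: "'a set \<Rightarrow> 'a set set \<Rightarrow> nat \<Rightarrow> ('a \<Rightarrow> nat) \<Rightarrow> bool" where
  "quotient_map J B k F \<longleftrightarrow> F ` J \<subseteq> {1..k} \<and> (\<forall>i\<in>{1..k}. {x\<in>J. F x = i} \<in> B)"

definition quot :: "'a set \<Rightarrow> ('a set \<Rightarrow> real) \<Rightarrow> nat \<Rightarrow> ('a \<Rightarrow> nat) \<Rightarrow> nat set \<Rightarrow> real" where
  "quot J phi k F = (\<lambda>A. if A \<subseteq> {1..k} then phi {x\<in>J. F x \<in> A} else 0)"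

definition Qset :: "'a set \<Rightarrow> 'a set set \<Rightarrow> ('a set \<Rightarrow> real) \<Rightarrow> nat \<Rightarrow> (nat set \<Rightarrow> real) set" where
  "Qset J B phi k = {quot J phi k F | F. quotient_map J B k F}"

text \<open>Euclidean distance in R^{2^k}, coordinates indexed by subsets of [k].\<close>
definition edist :: "nat \<Rightarrow> (nat set \<Rightarrow> real) \<Rightarrow> (nat set \<Rightarrow> real) \<Rightarrow> real" where
  "edist k u v = sqrt (\<Sum>A\<in>Pow {1..k}. (u A - v A)\<^sup>2)"

definition hdist :: "nat \<Rightarrow> (nat set \<Rightarrow> real) set \<Rightarrow> (nat set \<Rightarrow> real) set \<Rightarrow> real" where
  "hdist k S T = max (SUP u\<in>S. INF v\<in>T. edist k u v) (SUP v\<in>T. INF u\<in>S. edist k u v)"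

end

theory Submission
  imports Defs
begin

(* Q_k(phi) is a bounded subset of R^(2^k), so for every e > 0 it has a finite e-net, each point of
   which is a quotient phi o F^-1. The finitely many partitions F of J used for the nets of
   Q_1(phi), ..., Q_n(phi) have a common refinement H into sets of B, and every F factors through H.
   Hence each net point is a quotient of the finite quotient psi = phi o H^-1, while every quotient of
   psi is a quotient of phi: Q_k(psi) is an e-dense subset of Q_k(phi) for all k <= n, so their
   Hausdorff distance is at most e. Taking e = 1/(n+1) gives the sequence. *)

lemma quotient_map_fibre_in_algebra:
  assumes "algebra J B" "quotient_map J B k F"
  shows "{x\<in>J. F x = i} \<in> B"
proof (cases "i \<in> {1..k}")
  case True
  then show ?thesis using assms(2) unfolding quotient_map_def by blast
next
  case False
  then have "{x\<in>J. F x = i} = {x\<in>J. False}" using assms(2) unfolding quotient_map_def by auto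
  then show ?thesis using algebra.sets_Collect_const[OF assms(1)] by (simp only:)
qed

lemma quotient_map_preimage_in_algebra:
  assumes "algebra J B" "quotient_map J B k F" "finite A"
  shows "{x\<in>J. F x \<in> A} \<in> B"
  using ring_of_sets.sets_Collect_finite_Ex[OF algebra.axioms(1)[OF assms(1)], of A "\<lambda>i x. F x = i"]
    quotient_map_fibre_in_algebra[OF assms(1,2)] assms(3)
  by simp

lemma quotient_map_Pow_iff: "quotient_map I (Pow I) k G \<longleftrightarrow> G ` I \<subseteq> {1..k}"
  unfolding quotient_map_def by auto

lemma quotient_map_const_1:
  assumes "algebra J B" "1 \<le> k"
  shows "quotient_map J B k (\<lambda>_. 1)"
  using assms algebra.sets_Collect_const[OF assms(1)] unfolding quotient_map_def by auto

lemma quotient_map_comp: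
  assumes "algebra J B" "quotient_map J B m H" "G ` {1..m} \<subseteq> {1..k}"
  shows "quotient_map J B k (\<lambda>x. G (H x))"
proof -
  have "{x\<in>J. G (H x) = i} \<in> B" for i
  proof -
    have "{x\<in>J. G (H x) = i} = {x\<in>J. H x \<in> {j\<in>{1..m}. G j = i}}"
      using assms(2) unfolding quotient_map_def by auto
    also have "\<dots> \<in> B" by (rule quotient_map_preimage_in_algebra[OF assms(1,2)]) simp
    finally show ?thesis .
  qed
  moreover have "(\<lambda>x. G (H x)) ` J \<subseteq> {1..k}"
    using assms(2,3) unfolding quotient_map_def by auto
  ultimately show ?thesis unfolding quotient_map_def by blast
qed

lemma quot_comp:
  assumes "H ` J \<subseteq> {1..m}"
  shows "quot {1..m} (quot J phi m H) k G = quot J phi k (\<lambda>x. G (H x))"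
proof
  fix A
  have "{x\<in>J. H x \<in> {j\<in>{1..m}. G j \<in> A}} = {x\<in>J. G (H x) \<in> A}"
    using assms by auto
  then show "quot {1..m} (quot J phi m H) k G A = quot J phi k (\<lambda>x. G (H x)) A"
    unfolding quot_def by auto
qed

lemma Qset_quot_subset:
  assumes "algebra J B" "quotient_map J B m H"
  shows "Qset {1..m} (Pow {1..m}) (quot J phi m H) k \<subseteq> Qset J B phi k"
proof
  fix u assume "u \<in> Qset {1..m} (Pow {1..m}) (quot J phi m H) k"
  then obtain G where G: "G ` {1..m} \<subseteq> {1..k}" and u: "u = quot {1..m} (quot J phi m H) k G"
    unfolding Qset_def quotient_map_Pow_iff by blast
  have "u = quot J phi k (\<lambda>x. G (H x))"
    using u quot_comp assms(2) unfolding quotient_map_def by blast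
  then show "u \<in> Qset J B phi k"
    using quotient_map_comp[OF assms G] unfolding Qset_def by blast
qed

lemma quot_factor_in_Qset_quot:
  assumes "quotient_map J B m H" "G ` {1..m} \<subseteq> {1..k}" "\<forall>x\<in>J. F x = G (H x)"
  shows "quot J phi k F \<in> Qset {1..m} (Pow {1..m}) (quot J phi m H) k"
proof -
  have "quot J phi k F = quot J phi k (\<lambda>x. G (H x))"
    using assms(3) unfolding quot_def by (intro ext) (auto intro!: arg_cong[where f = phi])
  also have "\<dots> = quot {1..m} (quot J phi m H) k G"
    using quot_comp assms(1) unfolding quotient_map_def by metis
  finally show ?thesis
    using assms(2) unfolding Qset_def quotient_map_Pow_iff by blast
qed

lemma Qset_nonempty:
  assumes "algebra J B" "1 \<le> k"
  shows "Qset J B phi k \<noteq> {}"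
  using quotient_map_const_1[OF assms] unfolding Qset_def by blast

lemma Qset_bounded:
  assumes "algebra J B" "\<forall>A\<in>B. \<bar>phi A\<bar> \<le> C" "u \<in> Qset J B phi k"
  shows "\<bar>u A\<bar> \<le> C"
proof -
  obtain F where F: "quotient_map J B k F" and u: "u = quot J phi k F"
    using assms(3) unfolding Qset_def by blast
  have "0 \<le> C"
    using assms(2) algebra.sets_Collect_const[OF assms(1), of False] by fastforce
  moreover have "\<bar>phi {x\<in>J. F x \<in> A}\<bar> \<le> C" if "A \<subseteq> {1..k}"
    using assms(2) quotient_map_preimage_in_algebra[OF assms(1) F] finite_subset[OF that] by simp
  ultimately show ?thesis
    unfolding u quot_def by auto
qed

lemma edist_nonneg: "0 \<le> edist k u v"
  unfolding edist_def by (simp add: sum_nonneg)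

lemma edist_self: "edist k u u = 0"
  unfolding edist_def by simp

lemma edist_le_pow2_mult:
  assumes "\<And>A. A \<subseteq> {1..k} \<Longrightarrow> \<bar>u A - v A\<bar> \<le> d"
  shows "edist k u v \<le> 2 ^ k * d"
proof -
  have "edist k u v = L2_set (\<lambda>A. u A - v A) (Pow {1..k})"
    unfolding edist_def L2_set_def ..
  also have "\<dots> \<le> (\<Sum>A\<in>Pow {1..k}. \<bar>u A - v A\<bar>)"
    by (rule L2_set_le_sum_abs)
  also have "\<dots> \<le> of_nat (card (Pow {1..k})) * d"
    using assms by (intro sum_bounded_above) auto
  finally show ?thesis by (simp add: card_Pow)
qed

lemma hdist_le_if_dense_subset:
  assumes "S \<subseteq> T" "S \<noteq> {}" "\<And>v. v \<in> T \<Longrightarrow> \<exists>u\<in>S. edist k u v \<le> e"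
  shows "0 \<le> hdist k S T" "hdist k S T \<le> e"
proof -
  have bdd: "bdd_below ((\<lambda>u. edist k u v) ` X)" "bdd_below (edist k u ` X)" for u v X
    by (rule bdd_belowI2[where m = 0], rule edist_nonneg)+
  have "(INF v\<in>T. edist k u v) = 0" if "u \<in> S" for u
  proof (rule antisym)
    show "(INF v\<in>T. edist k u v) \<le> 0"
      using that assms(1) edist_self by (intro cINF_lower2[OF bdd(2)]) auto
    show "0 \<le> (INF v\<in>T. edist k u v)"
      using that assms(1) edist_nonneg by (intro cINF_greatest) auto
  qed
  then have near: "(SUP u\<in>S. INF v\<in>T. edist k u v) = 0"
    using assms(2) by simp
  have far: "(SUP v\<in>T. INF u\<in>S. edist k u v) \<le> e"
  proof (rule cSUP_least)
    show "T \<noteq> {}" using assms(1,2) by blast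
  next
    fix v assume "v \<in> T"
    then obtain u where "u \<in> S" "edist k u v \<le> e" using assms(3) by blast
    then show "(INF u\<in>S. edist k u v) \<le> e" by (intro cINF_lower2[OF bdd(1)])
  qed
  obtain v where "v \<in> T" using assms(1,2) by blast
  then have "0 \<le> e" using assms(3) edist_nonneg order_trans by blast
  then show "0 \<le> hdist k S T" "hdist k S T \<le> e"
    unfolding hdist_def near using far by auto
qed

lemma bounded_imp_finite_edist_net:
  assumes "\<And>u A. u \<in> Q \<Longrightarrow> A \<subseteq> {1..k} \<Longrightarrow> \<bar>u A\<bar> \<le> C" "0 < e"
  shows "\<exists>N\<subseteq>Q. finite N \<and> (\<forall>v\<in>Q. \<exists>u\<in>N. edist k u v \<le> e)"
proof -
  define d :: real where "d = e / 2 ^ k"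
  have "0 < d" unfolding d_def using assms(2) by simp
  define cell where "cell u = (\<lambda>A\<in>Pow {1..k}. \<lfloor>u A / d\<rfloor>)" for u :: "nat set \<Rightarrow> real"
  have "\<lfloor>u A / d\<rfloor> \<in> {\<lfloor>-C / d\<rfloor>..\<lfloor>C / d\<rfloor>}" if "u \<in> Q" "A \<subseteq> {1..k}" for u A
  proof -
    have "-C \<le> u A" "u A \<le> C" using assms(1)[OF that] by linarith+
    then have "-C / d \<le> u A / d" "u A / d \<le> C / d"
      using \<open>0 < d\<close> by (simp_all only: divide_right_mono less_imp_le)
    then show ?thesis by (simp add: floor_mono)
  qed
  then have "cell ` Q \<subseteq> (\<Pi>\<^sub>E A\<in>Pow {1..k}. {\<lfloor>-C / d\<rfloor>..\<lfloor>C / d\<rfloor>})"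
    unfolding cell_def by (simp add: image_subset_iff restrict_PiE_iff)
  then have "finite (cell ` Q)"
    by (rule finite_subset) (intro finite_PiE; simp)
  then obtain N where N: "N \<subseteq> Q" "finite N" "cell ` Q = cell ` N"
    using finite_subset_image[of "cell ` Q" cell Q] by blast
  have "\<exists>u\<in>N. edist k u v \<le> e" if "v \<in> Q" for v
  proof -
    obtain u where "u \<in> N" and same_cell: "cell u = cell v"
      using N(3) \<open>v \<in> Q\<close> by (metis imageE imageI)
    have "\<bar>u A - v A\<bar> \<le> d" if "A \<subseteq> {1..k}" for A
    proof -
      have "\<lfloor>u A / d\<rfloor> = \<lfloor>v A / d\<rfloor>"
        using fun_cong[OF same_cell, of A] that unfolding cell_def by simp
      then have "\<bar>u A / d - v A / d\<bar> < 1" by (rule floor_eq_imp_diff_1)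
      then show ?thesis
        using \<open>0 < d\<close> by (metis abs_div_pos diff_divide_distrib divide_less_eq_1_pos less_imp_le)
    qed
    then have "edist k u v \<le> 2 ^ k * d" by (rule edist_le_pow2_mult)
    then show ?thesis using \<open>u \<in> N\<close> unfolding d_def by auto
  qed
  then show ?thesis using N(1,2) by blast
qed

lemma Qset_finite_net:
  assumes "algebra J B" "\<forall>A\<in>B. \<bar>phi A\<bar> \<le> C" "0 < e"
  obtains \<Phi> where "finite \<Phi>" "\<And>F. F \<in> \<Phi> \<Longrightarrow> quotient_map J B k F"
    "\<And>v. v \<in> Qset J B phi k \<Longrightarrow> \<exists>F\<in>\<Phi>. edist k (quot J phi k F) v \<le> e"
proof -
  have "\<bar>u A\<bar> \<le> C" if "u \<in> Qset J B phi k" for u A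
    using Qset_bounded[OF assms(1,2) that] .
  then obtain N where N: "N \<subseteq> Qset J B phi k" "finite N"
    and net: "\<And>v. v \<in> Qset J B phi k \<Longrightarrow> \<exists>u\<in>N. edist k u v \<le> e"
    using bounded_imp_finite_edist_net[of "Qset J B phi k" k C e] assms(3) by meson
  have "N \<subseteq> quot J phi k ` {F. quotient_map J B k F}"
    using N(1) unfolding Qset_def by blast
  then obtain \<Phi> where \<Phi>: "\<Phi> \<subseteq> {F. quotient_map J B k F}" "finite \<Phi>" "N = quot J phi k ` \<Phi>"
    using finite_subset_image[OF N(2)] by meson
  show ?thesis
  proof (rule that)
    show "finite \<Phi>" "\<And>F. F \<in> \<Phi> \<Longrightarrow> quotient_map J B k F" using \<Phi>(1,2) by auto
    show "\<exists>F\<in>\<Phi>. edist k (quot J phi k F) v \<le> e" if "v \<in> Qset J B phi k" for v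
      using net[OF that] unfolding \<Phi>(3) by blast
  qed
qed

lemma factor_through_quotient_map:
  assumes "algebra J B" "finite (T ` J)" "\<And>v. {x\<in>J. T x = v} \<in> B"
  obtains m H D
  where "quotient_map J B m H" "D ` {1..m} \<subseteq> T ` J" "\<And>x. x \<in> J \<Longrightarrow> T x = D (H x)"
proof -
  define m where "m = card (T ` J)"
  obtain D where D: "bij_betw D {1..m} (T ` J)"
    using ex_bij_betw_nat_finite_1[OF assms(2)] unfolding m_def by blast
  define H where "H x = inv_into {1..m} D (T x)" for x
  have H_D: "T x = D (H x)" if "x \<in> J" for x
    unfolding H_def using D that by (simp add: bij_betw_inv_into_right)
  have "H ` J \<subseteq> {1..m}"
    unfolding H_def using D by (auto intro: inv_into_into simp: bij_betw_def)
  moreover have "{x\<in>J. H x = i} \<in> B" if "i \<in> {1..m}" for i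
  proof -
    have "{x\<in>J. H x = i} = {x\<in>J. T x = D i}"
      using H_D D that unfolding H_def by (auto simp: bij_betw_inv_into_left)
    then show ?thesis using assms(3) by simp
  qed
  ultimately have "quotient_map J B m H" unfolding quotient_map_def by blast
  moreover have "D ` {1..m} \<subseteq> T ` J" using D by (simp add: bij_betw_def)
  ultimately show ?thesis using H_D by (rule that)
qed

lemma quotient_maps_common_refinement:
  assumes "algebra J B" "finite P" "\<And>k F. (k, F) \<in> P \<Longrightarrow> quotient_map J B k F"
  obtains m H where "quotient_map J B m H"
    "\<And>k F. (k, F) \<in> P \<Longrightarrow> \<exists>G. G ` {1..m} \<subseteq> {1..k} \<and> (\<forall>x\<in>J. F x = G (H x))"
proof -
  interpret algebra J B by fact
  define T where "T x = (\<lambda>p\<in>P. snd p x)" for x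
  have "T ` J \<subseteq> (\<Pi>\<^sub>E p\<in>P. {1..fst p})"
    using assms(3) unfolding T_def quotient_map_def by fastforce
  then have "finite (T ` J)"
    by (rule finite_subset) (simp add: assms(2) finite_PiE)
  moreover have "{x\<in>J. T x = v} \<in> B" for v
  proof -
    have "{x\<in>J. T x = v} = {x\<in>J. \<not> (\<exists>p\<in>P. snd p x \<noteq> v p) \<and> v \<in> extensional P}"
      unfolding T_def by (auto simp: fun_eq_iff extensional_def)
    also have "\<dots> \<in> B"
      by (intro sets_Collect_conj sets_Collect_const sets_Collect_neg sets_Collect_finite_Ex)
        (auto intro: quotient_map_fibre_in_algebra[OF assms(1) assms(3)] simp: assms(2))
    finally show ?thesis .
  qed
  ultimately obtain m H D where H: "quotient_map J B m H"
    and D: "D ` {1..m} \<subseteq> T ` J" "\<And>x. x \<in> J \<Longrightarrow> T x = D (H x)"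
    using factor_through_quotient_map[OF assms(1)] by metis
  have "\<exists>G. G ` {1..m} \<subseteq> {1..k} \<and> (\<forall>x\<in>J. F x = G (H x))" if "(k, F) \<in> P" for k F
  proof (intro exI conjI)
    show "(\<lambda>i. D i (k, F)) ` {1..m} \<subseteq> {1..k}"
      using D(1) assms(3)[OF that] that unfolding T_def quotient_map_def by fastforce
    show "\<forall>x\<in>J. F x = D (H x) (k, F)"
      using D(2) that unfolding T_def by (metis restrict_apply' snd_conv)
  qed
  with H show ?thesis by (rule that)
qed

lemma finite_quotient_approximates_Qsets:
  assumes "algebra J B" "\<forall>A\<in>B. \<bar>phi A\<bar> \<le> C" "0 < e" "finite K"
  obtains m H where "quotient_map J B m H"
    "\<And>k v. k \<in> K \<Longrightarrow> v \<in> Qset J B phi k \<Longrightarrow>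
       \<exists>u\<in>Qset {1..m} (Pow {1..m}) (quot J phi m H) k. edist k u v \<le> e"
proof -
  have "\<forall>k. \<exists>\<Phi>. finite \<Phi> \<and> (\<forall>F\<in>\<Phi>. quotient_map J B k F) \<and>
          (\<forall>v\<in>Qset J B phi k. \<exists>F\<in>\<Phi>. edist k (quot J phi k F) v \<le> e)"
    by (metis Qset_finite_net[OF assms(1-3)])
  then obtain \<Phi> where \<Phi>: "\<And>k. finite (\<Phi> k)" "\<And>k F. F \<in> \<Phi> k \<Longrightarrow> quotient_map J B k F"
    and net: "\<And>k v. v \<in> Qset J B phi k \<Longrightarrow> \<exists>F\<in>\<Phi> k. edist k (quot J phi k F) v \<le> e"
    by metis
  obtain m H where H: "quotient_map J B m H"
    and factor: "\<And>k F. (k, F) \<in> Sigma K \<Phi> \<Longrightarrow>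
      \<exists>G. G ` {1..m} \<subseteq> {1..k} \<and> (\<forall>x\<in>J. F x = G (H x))"
    using quotient_maps_common_refinement[OF assms(1), of "Sigma K \<Phi>"] assms(4) \<Phi> by blast
  show ?thesis
  proof (rule that[OF H])
    fix k v assume "k \<in> K" "v \<in> Qset J B phi k"
    then obtain F where "F \<in> \<Phi> k" "edist k (quot J phi k F) v \<le> e"
      using net by blast
    moreover obtain G where "G ` {1..m} \<subseteq> {1..k}" "\<forall>x\<in>J. F x = G (H x)"
      using factor \<open>k \<in> K\<close> \<open>F \<in> \<Phi> k\<close> by blast
    ultimately show "\<exists>u\<in>Qset {1..m} (Pow {1..m}) (quot J phi m H) k. edist k u v \<le> e"
      using quot_factor_in_Qset_quot[OF H] by blast
  qed
qed

theorem theorem4p1: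
  fixes J :: "'a set" and B :: "'a set set" and phi :: "'a set \<Rightarrow> real"
  assumes "algebra J B"
    and "\<exists>C. \<forall>A\<in>B. \<bar>phi A\<bar> \<le> C"
    and "phi {} = 0"
  shows "\<exists>(ks :: nat \<Rightarrow> nat) (psi :: nat \<Rightarrow> nat set \<Rightarrow> real).
           (\<forall>n. psi n \<in> Qset J B phi (ks n)) \<and>
           (\<forall>k\<ge>1. (\<lambda>n. hdist k (Qset {1..ks n} (Pow {1..ks n}) (psi n) k) (Qset J B phi k))
                    \<longlonglongrightarrow> 0)"
proof -
  obtain C where C: "\<forall>A\<in>B. \<bar>phi A\<bar> \<le> C" using assms(2) by blast
  have "\<forall>n. \<exists>m H. quotient_map J B m H \<and> (\<forall>k\<in>{1..n}. \<forall>v\<in>Qset J B phi k.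
          \<exists>u\<in>Qset {1..m} (Pow {1..m}) (quot J phi m H) k. edist k u v \<le> inverse (real (Suc n)))"
    by (metis finite_quotient_approximates_Qsets[OF assms(1) C] finite_atLeastAtMost
        positive_imp_inverse_positive of_nat_0_less_iff zero_less_Suc)
  then obtain ks Hs where Hs: "\<And>n. quotient_map J B (ks n) (Hs n)"
    and approx: "\<And>n k v. k \<in> {1..n} \<Longrightarrow> v \<in> Qset J B phi k \<Longrightarrow>
       \<exists>u\<in>Qset {1..ks n} (Pow {1..ks n}) (quot J phi (ks n) (Hs n)) k.
         edist k u v \<le> inverse (real (Suc n))"
    by metis
  define psi where "psi n = quot J phi (ks n) (Hs n)" for n
  have "(\<lambda>n. hdist k (Qset {1..ks n} (Pow {1..ks n}) (psi n) k) (Qset J B phi k)) \<longlonglongrightarrow> 0"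
    (is "?hd \<longlonglongrightarrow> 0") if "1 \<le> k" for k
  proof (rule Lim_null_comparison[OF eventually_sequentiallyI[of k] LIMSEQ_inverse_real_of_nat])
    fix n assume "k \<le> n"
    then show "norm (?hd n) \<le> inverse (real (Suc n))"
      using hdist_le_if_dense_subset[OF Qset_quot_subset[OF assms(1) Hs]
          Qset_nonempty[OF algebra_Pow that] approx] \<open>1 \<le> k\<close>
      unfolding psi_def by simp
  qed
  moreover have "psi n \<in> Qset J B phi (ks n)" for n
    using Hs unfolding psi_def Qset_def by blast
  ultimately show ?thesis by blast
qed

end
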